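(* Suppose $p>1-1/e^2$ and fix $\epsilon'>0$. Then there is a constant $c_1=c_1(\epsilon')>0$ (independent of $n$) such that for every $n$ with $x_0(n)>\epsilon'$ we have $\varphi_n(x_0(n)-\epsilon')\ge c_1$.
   Context: Let $p\in(0,1)$ be constant, $q=1-p$, $b=1/q$, $\gamma=\gamma(n)=2\log_b n-2\log_b\log_b n-2\log_b 2$, $\Delta=\gamma-\lfloor\gamma\rfloor\in[0,1)$. Define $\varphi_n(x)=(1-\Delta+x)\log_b(1-\Delta+x)+(1-\Delta)(\Delta-x)/2$, and let $x_0=x_0(n)$ be the smallest nonnegative $x$ with $\varphi_n(x)\le0$ (well defined since $\varphi_n(\Delta)=0$, and $x_0\in[0,\Delta]$). *)

theory Defs
  imports Complex_Main
begin

definition base :: "real \<Rightarrow> real" where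
  "base p = 1 / (1 - p)"

definition gamma :: "real \<Rightarrow> nat \<Rightarrow> real" where
  "gamma p n = 2 * log (base p) (real n) - 2 * log (base p) (log (base p) (real n))
               - 2 * log (base p) 2"

definition Delta :: "real \<Rightarrow> nat \<Rightarrow> real" where
  "Delta p n = gamma p n - real_of_int \<lfloor>gamma p n\<rfloor>"

definition phi :: "real \<Rightarrow> nat \<Rightarrow> real \<Rightarrow> real" where
  "phi p n x = (1 - Delta p n + x) * log (base p) (1 - Delta p n + x)
               + (1 - Delta p n) * (Delta p n - x) / 2"

definition x0 :: "real \<Rightarrow> nat \<Rightarrow> real" where
  "x0 p n = (LEAST x. 0 \<le> x \<and> phi p n x \<le> 0)"

end

theory Submission imports Defs "HOL-Analysis.Analysis" begin

text \<open>Write \<open>\<phi>\<^sub>n(x) = f(1 - \<Delta> + x)\<close> with \<open>f(u) = u ln u / ln b + (1 - \<Delta>)(1 - u)/2\<close>.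
  At \<open>r = 1 - \<Delta> + x\<^sub>0\<close> the function \<open>f\<close> vanishes and it is positive just left of \<open>r\<close>,
  so \<open>f'(r) \<le> 0\<close>. Since \<open>f'' = 1/(u ln b) \<ge> 1/ln b\<close> on \<open>(0,1]\<close> and \<open>r \<le> 1\<close>, the
  tangent at \<open>r\<close> gives \<open>f(r - \<epsilon>') \<ge> \<epsilon>'\<^sup>2/(2 ln b)\<close>, uniformly in \<open>n\<close>.\<close>

lemma xlnx_tangent_gap:
  fixes t r :: real
  assumes "0 < t" "t \<le> r"
  shows "(r - t)\<^sup>2 / (2 * r) \<le> t * ln t - r * ln r - (1 + ln r) * (t - r)"
proof -
  define g where "g u = u * ln u - r * ln r - (1 + ln r) * (u - r) - (r - u)\<^sup>2 / (2 * r)" for u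
  have "g r \<le> g t"
  proof (rule DERIV_nonpos_imp_nonincreasing[OF assms(2)])
    fix u assume u: "t \<le> u" "u \<le> r"
    then have "0 < u" using assms by linarith
    have "ln (u / r) \<le> u / r - 1"
      using \<open>0 < u\<close> u by (intro ln_le_minus_one) auto
    then have "ln u - ln r + (r - u) / r \<le> 0"
      using \<open>0 < u\<close> u by (simp add: ln_div diff_divide_distrib)
    moreover have "DERIV g u :> ln u - ln r + (r - u) / r"
      unfolding g_def using \<open>0 < u\<close> u
      by (auto intro!: derivative_eq_intros simp: field_simps power2_eq_square)
    ultimately show "\<exists>y. DERIV g u :> y \<and> y \<le> 0" by blast
  qed
  then show ?thesis by (simp add: g_def)
qed

lemma DERIV_nonpos_if_left_ge:
  fixes f :: "real \<Rightarrow> real"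
  assumes "DERIV f r :> d" "t < r" "\<And>s. t < s \<Longrightarrow> s < r \<Longrightarrow> f r \<le> f s"
  shows "d \<le> 0"
proof (rule ccontr)
  assume "\<not> d \<le> 0"
  then obtain \<delta> where "\<delta> > 0" and \<delta>: "\<And>h. 0 < h \<Longrightarrow> h < \<delta> \<Longrightarrow> f (r - h) < f r"
    using DERIV_pos_inc_left[OF assms(1)] by force
  define h where "h = min (\<delta> / 2) ((r - t) / 2)"
  have h: "0 < h" "h < \<delta>" using \<open>\<delta> > 0\<close> assms(2) by (auto simp: h_def)
  have "h \<le> (r - t) / 2" unfolding h_def by (rule min.cobounded2)
  then have "t < r - h" using assms(2) by (simp add: field_simps)
  then show False using \<delta>[OF h] assms(3)[of "r - h"] h by force
qed

lemma xlnx_affine_ge_square_left_of_zero: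
  fixes L \<alpha> \<beta> t r :: real and f :: "real \<Rightarrow> real"
  assumes f_eq: "\<And>u. f u = u * ln u / L + \<alpha> * u + \<beta>"
    and "0 < L" "0 < t" "t < r" "r \<le> 1"
    and "f r = 0" and pos: "\<And>s. t < s \<Longrightarrow> s < r \<Longrightarrow> 0 < f s"
  shows "(r - t)\<^sup>2 / (2 * L) \<le> f t"
proof -
  have "DERIV f r :> (1 + ln r) / L + \<alpha>"
    unfolding f_eq[abs_def] using assms(2-4)
    by (auto intro!: derivative_eq_intros simp: field_simps)
  then have slope: "(1 + ln r) / L + \<alpha> \<le> 0"
    by (rule DERIV_nonpos_if_left_ge[OF _ \<open>t < r\<close>]) (use \<open>f r = 0\<close> pos in force)
  have "(r - t)\<^sup>2 / (2 * L) \<le> (r - t)\<^sup>2 / (2 * r) / L"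
    using assms(2-5) by (auto simp: field_simps intro!: mult_left_mono)
  also have "\<dots> \<le> (t * ln t - r * ln r - (1 + ln r) * (t - r)) / L"
    using xlnx_tangent_gap[of t r] assms(2-4) by (intro divide_right_mono) auto
  also have "\<dots> = f t - f r - ((1 + ln r) / L + \<alpha>) * (t - r)"
    using assms(2) by (simp add: f_eq field_simps)
  also have "\<dots> \<le> f t"
    using slope \<open>t < r\<close> \<open>f r = 0\<close> by (simp add: mult_nonpos_nonpos)
  finally show ?thesis .
qed

lemma Least_nonneg_nonpos:
  fixes g :: "real \<Rightarrow> real"
  assumes cont: "continuous_on {0..} g" and "0 \<le> D" "g D \<le> 0"
  defines "m \<equiv> LEAST x. 0 \<le> x \<and> g x \<le> 0"
  shows "0 \<le> m" "m \<le> D" "g m \<le> 0" "\<And>x. 0 \<le> x \<Longrightarrow> x < m \<Longrightarrow> 0 < g x"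
proof -
  define S where "S = {0..} \<inter> g -` {..0}"
  have "closed S"
    unfolding S_def by (rule continuous_closed_preimage[OF cont]) auto
  moreover have "bdd_below S" "D \<in> S"
    using assms(2,3) by (auto simp: S_def intro: bdd_belowI[of _ 0])
  ultimately have "Inf S \<in> S" and Inf_le: "\<And>y. y \<in> S \<Longrightarrow> Inf S \<le> y"
    using closed_contains_Inf cInf_lower by blast+
  then have "m = Inf S"
    unfolding m_def by (intro Least_equality) (auto simp: S_def)
  then show "0 \<le> m" "m \<le> D" "g m \<le> 0" "\<And>x. 0 \<le> x \<Longrightarrow> x < m \<Longrightarrow> 0 < g x"
    using \<open>Inf S \<in> S\<close> Inf_le[OF \<open>D \<in> S\<close>] Inf_le by (force simp: S_def)+
qed

lemma first_nonpos_point_is_zero: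
  fixes g :: "real \<Rightarrow> real"
  assumes "isCont g m" "g m \<le> 0" "c < m" "\<And>x. c < x \<Longrightarrow> x < m \<Longrightarrow> 0 < g x"
  shows "g m = 0"
proof -
  have "0 \<le> g m"
  proof (rule tendsto_lowerbound)
    show "(g \<longlongrightarrow> g m) (at_left m)"
      using assms(1) by (simp add: isCont_def filterlim_at_split)
    show "\<forall>\<^sub>F x in at_left m. 0 \<le> g x"
      using eventually_at_left_real[OF assms(3)] by eventually_elim (auto intro: less_imp_le assms(4))
  qed simp
  with assms(2) show ?thesis by simp
qed

lemma phi_eq_xlnx_affine:
  "phi p n x = (1 - Delta p n + x) * ln (1 - Delta p n + x) / ln (base p)
     + (- (1 - Delta p n) / 2) * (1 - Delta p n + x) + (1 - Delta p n) / 2"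
  unfolding phi_def log_def by (simp add: field_simps)

lemma x0_properties:
  assumes "0 < p" "p < 1"
  shows "0 \<le> x0 p n" "x0 p n \<le> Delta p n"
    and "\<And>x. 0 \<le> x \<Longrightarrow> x < x0 p n \<Longrightarrow> 0 < phi p n x"
    and "0 < x0 p n \<Longrightarrow> phi p n (x0 p n) = 0"
proof -
  have D: "0 \<le> Delta p n" "Delta p n < 1"
    unfolding Delta_def by linarith+
  have cont: "continuous_on {0..} (phi p n)"
    unfolding phi_eq_xlnx_affine using D assms
    by (intro continuous_intros) (auto simp: base_def)
  have "phi p n (Delta p n) = 0" by (simp add: phi_def)
  note m = Least_nonneg_nonpos[OF cont D(1), folded x0_def, OF eq_refl[OF this]]
  show "0 \<le> x0 p n" "x0 p n \<le> Delta p n" "\<And>x. 0 \<le> x \<Longrightarrow> x < x0 p n \<Longrightarrow> 0 < phi p n x"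
    using m by auto
  show "phi p n (x0 p n) = 0" if "0 < x0 p n"
  proof (rule first_nonpos_point_is_zero[where g = "phi p n" and m = "x0 p n" and c = 0])
    show "isCont (phi p n) (x0 p n)"
      using continuous_on_interior[OF cont] that by simp
  qed (use m(3,4) that in auto)
qed

theorem lemma5:
  fixes p \<epsilon>' :: real
  assumes "0 < p" "p < 1" "p > 1 - 1 / exp 2" "\<epsilon>' > 0"
  shows "\<exists>c1 > 0. \<forall>n::nat. x0 p n > \<epsilon>' \<longrightarrow> phi p n (x0 p n - \<epsilon>') \<ge> c1"
proof (intro exI[of _ "\<epsilon>'\<^sup>2 / (2 * ln (base p))"] conjI allI impI)
  have L: "0 < ln (base p)" using assms(1,2) by (simp add: base_def)
  then show "0 < \<epsilon>'\<^sup>2 / (2 * ln (base p))" using assms(4) by simp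
  fix n :: nat
  assume "\<epsilon>' < x0 p n"
  note x0 = x0_properties[OF assms(1,2), where n = n]
  define a where "a = 1 - Delta p n"
  define f where "f u = u * ln u / ln (base p) + (- a / 2) * u + a / 2" for u
  have phi_f: "phi p n x = f (a + x)" for x
    by (simp add: phi_eq_xlnx_affine f_def a_def)
  have "0 < a" unfolding a_def Delta_def by linarith
  have "(a + x0 p n - (a + (x0 p n - \<epsilon>')))\<^sup>2 / (2 * ln (base p)) \<le> f (a + (x0 p n - \<epsilon>'))"
  proof (rule xlnx_affine_ge_square_left_of_zero[OF f_def L])
    show "0 < a + (x0 p n - \<epsilon>')" "a + (x0 p n - \<epsilon>') < a + x0 p n" "a + x0 p n \<le> 1"
      using \<open>0 < a\<close> \<open>\<epsilon>' < x0 p n\<close> assms(4) x0(2) by (auto simp: a_def)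
    show "f (a + x0 p n) = 0"
      using x0(4) \<open>\<epsilon>' < x0 p n\<close> assms(4) by (simp add: phi_f)
    show "0 < f s" if "a + (x0 p n - \<epsilon>') < s" "s < a + x0 p n" for s
      using x0(3)[of "s - a"] that \<open>\<epsilon>' < x0 p n\<close> by (simp add: phi_f)
  qed
  then show "\<epsilon>'\<^sup>2 / (2 * ln (base p)) \<le> phi p n (x0 p n - \<epsilon>')"
    by (simp add: phi_f)
qed

end
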